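(* Every regular normal extremal that is time-optimal for the problem below has at most two switching times, i.e. consists of at most three arcs. Moreover its bang pattern (ordered sequence of arc types) is either $X$ or $X\,Y\,X$; in particular, the only pattern with at least one switching is $XYX$ (global–local–global).
   Context: Fix $\gamma\in(0,\pi/2)$, $s=\sin\gamma$, $c=\cos\gamma$, and $X=\begin{pmatrix}0&s^2&sc\\-s^2&0&0\\-sc&0&0\end{pmatrix}$ (continuous-limit generator of the global Grover operator), $Y=\begin{pmatrix}0&1&0\\-1&0&0\\0&0&0\end{pmatrix}$ (generator of the local Grover operator), acting on $\mathbb R^3$ with standard basis $e_1,e_2,e_3$ and standard inner product. Let $\Sigma=\{\psi:\langle e_3,\psi\rangle=0\}$, $\psi_0=(0,s,c)^\top$. Time-optimal problem: over piecewise constant controls $A:[0,T]\to\{X,Y\}$ with finitely many discontinuities (switching times) and trajectories $\dot\psi=A(t)\psi$, $\psi(0)=\psi_0$, minimize $T$ subject to $\psi(T)\in\Sigma$. Maximal intervals on which $A\equiv X$ (resp. $Y$) are $X$-arcs (resp. $Y$-arcs). A normal extremal is such a trajectory with a nonzero absolutely continuous costate $p$ satisfying $\dot p=-A(t)^\top p$ and, for a.e. $t$, $\langle p,A(t)\psi\rangle-1=\max_{B\in\{X,Y\}}(\langle p,B\psi\rangle-1)$. Let $F_1=X-Y$, $F_2=[X,Y]$, $\phi_1=\langle p,F_1\psi\rangle$ (the switching function), $\phi_2=\langle p,F_2\psi\rangle$. A normal extremal is regular (bang–bang) if $\phi_1$ vanishes only at isolated times and at every switching time $\phi_1=0$ and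 $\phi_2\neq0$. *)

theory Defs
  imports "HOL-Analysis.Analysis"
begin

text \<open>Vectors are in real^3, matrices in real^3^3 (row i of M is M$i, so M *v x is the usual product).\<close>

definition Xm :: "real \<Rightarrow> real^3^3" where
  "Xm \<gamma> = (let s = sin \<gamma>; c = cos \<gamma> in
     vector [vector [0, s^2, s*c], vector [-(s^2), 0, 0], vector [-(s*c), 0, 0]])"

definition Ym :: "real^3^3" where
  "Ym = vector [vector [0, 1, 0], vector [-1, 0, 0], vector [0, 0, 0]]"

definition psi0 :: "real \<Rightarrow> real^3" where
  "psi0 \<gamma> = vector [0, sin \<gamma>, cos \<gamma>]"

definition inSigma :: "real^3 \<Rightarrow> bool" where
  "inSigma \<psi> \<longleftrightarrow> \<psi> \<bullet> axis 3 1 = 0"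

definition control_disc :: "(real \<Rightarrow> real^3^3) \<Rightarrow> real \<Rightarrow> real set" where
  "control_disc A T = {t \<in> {0..T}. \<not> continuous (at t within {0..T}) A}"

definition switching_times :: "(real \<Rightarrow> real^3^3) \<Rightarrow> real \<Rightarrow> real set" where
  "switching_times A T = {t \<in> {0<..<T}. \<not> continuous (at t within {0..T}) A}"

definition admissible :: "real \<Rightarrow> (real \<Rightarrow> real^3^3) \<Rightarrow> (real \<Rightarrow> real^3) \<Rightarrow> real \<Rightarrow> bool" where
  "admissible \<gamma> A \<psi> T \<longleftrightarrow>
     0 \<le> T \<and> (\<forall>t\<in>{0..T}. A t \<in> {Xm \<gamma>, Ym}) \<and> finite (control_disc A T) \<and>
     continuous_on {0..T} \<psi> \<and> \<psi> 0 = psi0 \<gamma> \<and>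
     (\<forall>t \<in> {0..T} - control_disc A T.
        (\<psi> has_vector_derivative (A t *v \<psi> t)) (at t within {0..T}))"

definition time_optimal :: "real \<Rightarrow> (real \<Rightarrow> real^3^3) \<Rightarrow> (real \<Rightarrow> real^3) \<Rightarrow> real \<Rightarrow> bool" where
  "time_optimal \<gamma> A \<psi> T \<longleftrightarrow>
     admissible \<gamma> A \<psi> T \<and> inSigma (\<psi> T) \<and>
     (\<forall>A' \<psi>' T'. admissible \<gamma> A' \<psi>' T' \<and> inSigma (\<psi>' T') \<longrightarrow> T \<le> T')"

definition normal_extremal ::
  "real \<Rightarrow> (real \<Rightarrow> real^3^3) \<Rightarrow> (real \<Rightarrow> real^3) \<Rightarrow> real \<Rightarrow> (real \<Rightarrow> real^3) \<Rightarrow> bool" where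
  "normal_extremal \<gamma> A \<psi> T p \<longleftrightarrow>
     admissible \<gamma> A \<psi> T \<and> continuous_on {0..T} p \<and> (\<exists>t\<in>{0..T}. p t \<noteq> 0) \<and>
     (\<forall>t \<in> {0..T} - control_disc A T.
        (p has_vector_derivative (- (transpose (A t) *v p t))) (at t within {0..T})) \<and>
     (AE t in lborel. t \<in> {0..T} \<longrightarrow>
        p t \<bullet> (A t *v \<psi> t) - 1 =
          max (p t \<bullet> (Xm \<gamma> *v \<psi> t) - 1) (p t \<bullet> (Ym *v \<psi> t) - 1))"

definition F1 :: "real \<Rightarrow> real^3^3" where
  "F1 \<gamma> = Xm \<gamma> - Ym"

definition F2 :: "real \<Rightarrow> real^3^3" where
  "F2 \<gamma> = Xm \<gamma> ** Ym - Ym ** Xm \<gamma>"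

definition phi1 :: "real \<Rightarrow> (real \<Rightarrow> real^3) \<Rightarrow> (real \<Rightarrow> real^3) \<Rightarrow> real \<Rightarrow> real" where
  "phi1 \<gamma> \<psi> p t = p t \<bullet> (F1 \<gamma> *v \<psi> t)"

definition phi2 :: "real \<Rightarrow> (real \<Rightarrow> real^3) \<Rightarrow> (real \<Rightarrow> real^3) \<Rightarrow> real \<Rightarrow> real" where
  "phi2 \<gamma> \<psi> p t = p t \<bullet> (F2 \<gamma> *v \<psi> t)"

definition regular_extremal ::
  "real \<Rightarrow> (real \<Rightarrow> real^3^3) \<Rightarrow> (real \<Rightarrow> real^3) \<Rightarrow> real \<Rightarrow> (real \<Rightarrow> real^3) \<Rightarrow> bool" where
  "regular_extremal \<gamma> A \<psi> T p \<longleftrightarrow>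
     normal_extremal \<gamma> A \<psi> T p \<and>
     (\<forall>t\<in>{0..T}. phi1 \<gamma> \<psi> p t = 0 \<longrightarrow>
        (\<exists>e>0. \<forall>u\<in>{0..T}. phi1 \<gamma> \<psi> p u = 0 \<and> \<bar>u - t\<bar> < e \<longrightarrow> u = t)) \<and>
     (\<forall>t \<in> switching_times A T. phi1 \<gamma> \<psi> p t = 0 \<and> phi2 \<gamma> \<psi> p t \<noteq> 0)"

definition bang_pattern :: "(real \<Rightarrow> real^3^3) \<Rightarrow> real \<Rightarrow> (real^3^3) list" where
  "bang_pattern A T =
     (let ts = sorted_list_of_set (switching_times A T); pts = 0 # ts @ [T]
      in map (\<lambda>i. A ((pts ! i + pts ! Suc i) / 2)) [0..<length ts + 1])"

end

theory Submission
  imports Defs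
begin

(*
  In fact a regular time-optimal extremal has no switching at all. Since F1 psi0 = 0, the switching
  function phi1 vanishes at t = 0; moreover phi1' = phi2 on every arc and phi2' = -(sin gamma)^2 phi1
  on X-arcs. The pure X-trajectory reaches Sigma at time pi / (2 sin gamma), so optimality gives
  sin gamma * T <= pi / 2, and then phi1 cannot vanish at both ends of an X-arc without vanishing
  identically, which regularity forbids. Hence, if there is a switching, the first arc is a Y-arc.
  The next arc cannot be a Y-arc (phi1 changes sign at the switching since phi2 /= 0 there, so X would
  beat Y on one side, against the maximum condition), nor an X-arc ending at a switching, nor an X-arc
  ending at T, because after a Y-arc and an X-arc the third coordinate of psi is positive. Finally a
  single Y-arc keeps that coordinate equal to cos gamma, so the control is X throughout.
*)

section \<open>Harmonic oscillations and rotations\<close>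

lemma rotation_ode_solution:
  fixes f g :: "real \<Rightarrow> real"
  assumes cont: "continuous_on {a..b} f" "continuous_on {a..b} g"
    and f': "\<And>t. a < t \<Longrightarrow> t < b \<Longrightarrow> (f has_real_derivative k * g t) (at t)"
    and g': "\<And>t. a < t \<Longrightarrow> t < b \<Longrightarrow> (g has_real_derivative - (k * f t)) (at t)"
    and t: "t \<in> {a..b}"
  shows "f t = f a * cos (k * (t - a)) + g a * sin (k * (t - a))"
    and "g t = g a * cos (k * (t - a)) - f a * sin (k * (t - a))"
proof -
  define F where "F x = f a * cos (k * (x - a)) + g a * sin (k * (x - a))" for x
  define G where "G x = g a * cos (k * (x - a)) - f a * sin (k * (x - a))" for x
  \<comment> \<open>(f - F, g - G) solves the same system, so its squared norm E is constant.\<close>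
  define E where "E x = (f x - F x)\<^sup>2 + (g x - G x)\<^sup>2" for x
  have "E t = E a"
  proof (cases "t = a")
    case False
    with t have "a < t" by simp
    then show ?thesis
    proof (rule DERIV_isconst_end)
      show "continuous_on {a..t} E"
        using t unfolding E_def F_def G_def
        by (intro continuous_intros continuous_on_subset[OF cont(1)] continuous_on_subset[OF cont(2)])
          auto
    next
      fix x assume x: "a < x" "x < t"
      then have "x < b" using t by auto
      have "(E has_real_derivative
          2 * (f x - F x) * (k * g x - k * G x) + 2 * (g x - G x) * (- (k * f x) + k * F x)) (at x)"
        unfolding E_def F_def G_def
        by (rule derivative_eq_intros f'[OF x(1) \<open>x < b\<close>] g'[OF x(1) \<open>x < b\<close>] refl | simp)+
          (simp add: algebra_simps)
      then show "(E has_real_derivative 0) (at x)" by (simp add: algebra_simps)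
    qed
  qed simp
  then have "E t = 0" by (simp add: E_def F_def G_def)
  then show "f t = f a * cos (k * (t - a)) + g a * sin (k * (t - a))"
    and "g t = g a * cos (k * (t - a)) - f a * sin (k * (t - a))"
    by (simp_all add: E_def F_def G_def sum_power2_eq_zero_iff)
qed

lemma harmonic_eq_0_between_close_zeros:
  fixes f g :: "real \<Rightarrow> real"
  assumes k: "0 < k" and ab: "a < b" "k * (b - a) < pi"
    and cont: "continuous_on {a..b} f" "continuous_on {a..b} g"
    and f': "\<And>t. a < t \<Longrightarrow> t < b \<Longrightarrow> (f has_real_derivative g t) (at t)"
    and g': "\<And>t. a < t \<Longrightarrow> t < b \<Longrightarrow> (g has_real_derivative - (k\<^sup>2 * f t)) (at t)"
    and zeros: "f a = 0" "f b = 0"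
    and t: "t \<in> {a..b}"
  shows "f t = 0"
proof -
  have "(f has_real_derivative k * (g t / k)) (at t)" if "a < t" "t < b" for t
    using f'[OF that] k by simp
  moreover have "((\<lambda>t. g t / k) has_real_derivative - (k * f t)) (at t)" if "a < t" "t < b" for t
    using DERIV_cdivide[OF g'[OF that], of k] k by (simp add: power2_eq_square)
  moreover have "continuous_on {a..b} (\<lambda>t. g t / k)"
    by (intro continuous_intros cont) (use k in simp)
  ultimately have rot: "f x = g a / k * sin (k * (x - a))" if "x \<in> {a..b}" for x
    using rotation_ode_solution(1)[OF cont(1), of "\<lambda>t. g t / k" k x] that zeros(1) by simp
  have "0 < sin (k * (b - a))"
    using ab k by (intro sin_gt_zero) auto
  with rot[of b] zeros(2) ab k have "g a = 0" by simp
  then show ?thesis using rot[OF t] by simp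
qed

lemma rotation_arc:
  fixes \<psi> :: "real \<Rightarrow> 'a::real_inner"
  assumes uv: "u \<bullet> u = 1" "v \<bullet> v = 1" "u \<bullet> v = 0"
    and cont: "continuous_on {a..b} \<psi>"
    and \<psi>': "\<And>t. a < t \<Longrightarrow> t < b \<Longrightarrow>
      (\<psi> has_vector_derivative k *\<^sub>R ((v \<bullet> \<psi> t) *\<^sub>R u - (u \<bullet> \<psi> t) *\<^sub>R v)) (at t)"
    and t: "t \<in> {a..b}"
  shows "u \<bullet> \<psi> t = (u \<bullet> \<psi> a) * cos (k * (t - a)) + (v \<bullet> \<psi> a) * sin (k * (t - a))"
    and "v \<bullet> \<psi> t = (v \<bullet> \<psi> a) * cos (k * (t - a)) - (u \<bullet> \<psi> a) * sin (k * (t - a))"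
    and "w \<bullet> u = 0 \<Longrightarrow> w \<bullet> v = 0 \<Longrightarrow> w \<bullet> \<psi> t = w \<bullet> \<psi> a"
proof -
  have w': "((\<lambda>t. w \<bullet> \<psi> t) has_real_derivative
      k * ((v \<bullet> \<psi> t) * (w \<bullet> u) - (u \<bullet> \<psi> t) * (w \<bullet> v))) (at t)"
    if "a < t" "t < b" for w t
    using bounded_linear.has_vector_derivative[OF bounded_linear_inner_right \<psi>'[OF that]]
    by (simp add: has_real_derivative_iff_has_vector_derivative inner_diff_right)
  have cont_w: "continuous_on {a..b} (\<lambda>t. w \<bullet> \<psi> t)" for w
    by (intro continuous_intros cont)
  have vu: "v \<bullet> u = 0"
    using uv(3) by (simp add: inner_commute)
  show "u \<bullet> \<psi> t = (u \<bullet> \<psi> a) * cos (k * (t - a)) + (v \<bullet> \<psi> a) * sin (k * (t - a))"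
    and "v \<bullet> \<psi> t = (v \<bullet> \<psi> a) * cos (k * (t - a)) - (u \<bullet> \<psi> a) * sin (k * (t - a))"
    using rotation_ode_solution[of a b "\<lambda>t. u \<bullet> \<psi> t" "\<lambda>t. v \<bullet> \<psi> t" k t, OF cont_w cont_w _ _ t]
      w'[of _ u] w'[of _ v] uv vu
    by simp_all
  assume "w \<bullet> u = 0" "w \<bullet> v = 0"
  then have "((\<lambda>t. w \<bullet> \<psi> t) has_real_derivative 0) (at x)" if "a < x" "x < t" for x
    using w'[of x w] that t by simp
  then show "w \<bullet> \<psi> t = w \<bullet> \<psi> a"
    using t DERIV_isconst_end[OF _ continuous_on_subset[OF cont_w]] by (cases "t = a") auto
qed

lemma inner_mult_vec_has_derivative:
  fixes p \<psi> :: "real \<Rightarrow> real^'n" and A M :: "real^'n^'n"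
  assumes p': "(p has_vector_derivative - (transpose A *v p t)) (at t)"
    and \<psi>': "(\<psi> has_vector_derivative A *v \<psi> t) (at t)"
  shows "((\<lambda>t. p t \<bullet> (M *v \<psi> t)) has_real_derivative p t \<bullet> ((M ** A - A ** M) *v \<psi> t)) (at t)"
proof -
  have "((\<lambda>t. M *v \<psi> t) has_vector_derivative M *v (A *v \<psi> t)) (at t)"
    using bounded_linear.has_vector_derivative[OF matrix_vector_mul_bounded_linear \<psi>'] .
  from has_derivative_inner[OF p'[unfolded has_vector_derivative_def]
      this[unfolded has_vector_derivative_def]]
  show ?thesis
    unfolding has_field_derivative_def
    by (rule has_derivative_eq_rhs) (simp add: fun_eq_iff matrix_vector_mul_assoc
        matrix_vector_mult_diff_rdistrib inner_diff_right dot_lmul_matrix algebra_simps)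
qed

lemma simple_zero_obtains_positive_side:
  fixes f g :: "real \<Rightarrow> real"
  assumes t: "a < t" "t < b" and cont: "continuous_on {a..b} f" and zero: "f t = 0"
    and f': "\<And>x. a < x \<Longrightarrow> x < b \<Longrightarrow> x \<noteq> t \<Longrightarrow> (f has_real_derivative g x) (at x)"
    and g: "isCont g t" "g t \<noteq> 0"
  obtains c d where "a \<le> c" "c < d" "d \<le> b" "\<forall>x\<in>{c<..<d}. 0 < f x"
proof -
  have "isCont (\<lambda>x. g t * g x) t"
    using g(1) by (intro continuous_intros)
  moreover have "0 < g t * g t"
    using g(2) by (auto simp: zero_less_mult_iff)
  ultimately have "\<forall>\<^sub>F x in at t. 0 < g t * g x"
    by (simp add: isCont_def order_tendstoD(1))
  then obtain e where "0 < e" and e: "\<And>x. x \<noteq> t \<Longrightarrow> dist x t < e \<Longrightarrow> 0 < g t * g x"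
    by (auto simp: eventually_at)
  show thesis
  proof (cases "0 < g t")
    case True
    define d where "d = min (t + e) b"
    have "f t < f x" if x: "t < x" "x < d" for x
    proof (rule DERIV_pos_imp_increasing_open[OF x(1)])
      fix y assume "t < y" "y < x"
      then show "\<exists>z. (f has_real_derivative z) (at y) \<and> 0 < z"
        using e[of y] f'[of y] True t x by (auto simp: d_def dist_real_def zero_less_mult_iff)
    qed (use x t in \<open>auto simp: d_def intro: continuous_on_subset[OF cont]\<close>)
    then show thesis
      using that[of t d] t \<open>0 < e\<close> zero by (auto simp: d_def)
  next
    case False
    define c where "c = max (t - e) a"
    have "f t < f x" if x: "c < x" "x < t" for x
    proof (rule DERIV_neg_imp_decreasing_open[OF x(2)])
      fix y assume "x < y" "y < t"
      then show "\<exists>z. (f has_real_derivative z) (at y) \<and> z < 0"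
        using e[of y] f'[of y] False t x by (auto simp: c_def dist_real_def zero_less_mult_iff)
    qed (use x t in \<open>auto simp: c_def intro: continuous_on_subset[OF cont]\<close>)
    then show thesis
      using that[of c t] t \<open>0 < e\<close> zero by (auto simp: c_def)
  qed
qed

lemma AE_lborel_imp_ex_in_Ioo:
  fixes P :: "real \<Rightarrow> bool"
  assumes ae: "AE t in lborel. t \<in> S \<longrightarrow> P t" and "a < b" "{a<..<b} \<subseteq> S"
  shows "\<exists>t\<in>{a<..<b}. P t"
proof (rule ccontr)
  assume "\<not> (\<exists>t\<in>{a<..<b}. P t)"
  from ae have "AE t in lborel. t \<notin> {a<..<b}"
    by eventually_elim (use \<open>\<not> (\<exists>t\<in>{a<..<b}. P t)\<close> \<open>{a<..<b} \<subseteq> S\<close> in auto)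
  then have "{a<..<b} \<in> null_sets lborel"
    by (simp add: AE_iff_null_sets)
  with \<open>a < b\<close> show False
    by (simp add: null_sets_def)
qed

lemma finite_obtains_gap:
  fixes S :: "'a::linorder set"
  assumes "finite S" "a < b"
  obtains c where "a < c" "c \<le> b" "c \<in> insert b S" "\<forall>x\<in>{a<..<c}. x \<notin> S"
proof
  let ?C = "insert b {x \<in> S. a < x}"
  have "finite ?C" using assms(1) by simp
  then show "a < Min ?C" "Min ?C \<le> b" "Min ?C \<in> insert b S"
    using assms(2) Min_in[of ?C] by (auto simp: Min_gr_iff)
  have "Min ?C \<le> x" if "x \<in> S" "a < x" for x
    using \<open>finite ?C\<close> that by (intro Min_le) auto
  then show "\<forall>x\<in>{a<..<Min ?C}. x \<notin> S"
    by force
qed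

lemma mult_sin_less_sin_mult:
  fixes s t :: real
  assumes s: "0 < s" "s < 1" and t: "0 < t" "s * t \<le> pi / 2"
  shows "s * sin t < sin (s * t)"
proof -
  have le_pi_half: "s * sin x < sin (s * x)" if x: "0 < x" "x \<le> pi / 2" for x
  proof -
    define h where "h y = sin (s * y) - s * sin y" for y
    have "h 0 < h x"
    proof (rule DERIV_pos_imp_increasing_open[OF x(1)])
      fix y assume y: "0 < y" "y < x"
      have "cos y < cos (s * y)"
        using x y s by (intro cos_monotone_0_pi) (auto simp: mult_less_cancel_right2)
      moreover have "(h has_real_derivative s * cos (s * y) - s * cos y) (at y)"
        unfolding h_def by (rule derivative_eq_intros refl | simp)+
      ultimately show "\<exists>z. (h has_real_derivative z) (at y) \<and> 0 < z"
        using s by (intro exI[of _ "s * cos (s * y) - s * cos y"]) simp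
    qed (simp add: h_def continuous_intros)
    then show ?thesis by (simp add: h_def)
  qed
  show ?thesis
  proof (cases "t \<le> pi / 2")
    case True
    then show ?thesis using le_pi_half t by blast
  next
    case False
    have "s * sin t \<le> s * sin (pi / 2)"
      using s by (simp add: mult_left_le)
    also have "\<dots> < sin (s * (pi / 2))"
      using le_pi_half[of "pi / 2"] by simp
    also have "\<dots> \<le> sin (s * t)"
    proof (rule sin_monotone_2pi_le)
      have "0 \<le> s * (pi / 2)"
        using s by simp
      then show "- (pi / 2) \<le> s * (pi / 2)"
        using pi_gt_zero by linarith
      show "s * (pi / 2) \<le> s * t"
        using False s by (intro mult_left_mono) auto
    qed (use t in simp)
    finally show ?thesis .
  qed
qed

section \<open>The generators X and Y\<close>

lemma axis_nth_neq [simp]: "j \<noteq> i \<Longrightarrow> axis i x $ j = 0"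
  by (simp add: axis_def)

lemma psi0_nth: "psi0 \<gamma> $ 1 = 0" "psi0 \<gamma> $ 2 = sin \<gamma>" "psi0 \<gamma> $ 3 = cos \<gamma>"
  by (simp_all add: psi0_def)

lemma inner_psi0: "psi0 \<gamma> \<bullet> x = sin \<gamma> * x $ 2 + cos \<gamma> * x $ 3"
  by (simp add: inner_vec_def sum_3 psi0_def)

definition psi0_normal :: "real \<Rightarrow> real^3" where
  "psi0_normal \<gamma> = vector [0, cos \<gamma>, - sin \<gamma>]"

lemma psi0_normal_nth:
  "psi0_normal \<gamma> $ 1 = 0" "psi0_normal \<gamma> $ 2 = cos \<gamma>" "psi0_normal \<gamma> $ 3 = - sin \<gamma>"
  by (simp_all add: psi0_normal_def)

lemma inner_psi0_normal: "psi0_normal \<gamma> \<bullet> x = cos \<gamma> * x $ 2 - sin \<gamma> * x $ 3"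
  by (simp add: inner_vec_def sum_3 psi0_normal_def)

lemma inner_psi0_psi0 [simp]: "psi0 \<gamma> \<bullet> psi0 \<gamma> = 1"
  by (simp add: inner_psi0 psi0_nth flip: power2_eq_square)

lemma inner_axis_1_psi0 [simp]: "axis 1 1 \<bullet> psi0 \<gamma> = 0"
  by (simp add: inner_axis' psi0_nth)

lemma inner_psi0_normal_axis_1 [simp]: "psi0_normal \<gamma> \<bullet> axis 1 1 = 0"
  by (simp add: inner_axis psi0_normal_nth)

lemma inner_psi0_normal_psi0 [simp]: "psi0_normal \<gamma> \<bullet> psi0 \<gamma> = 0"
  by (simp add: inner_psi0_normal psi0_nth)

lemma cos_mult_cos_mult: "cos x * (cos x * y) = y - sin x * (sin x * (y::real))"
  using sin_cos_squared_add[of x] by algebra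

lemma nth_3_eq_psi0_frame: "x $ 3 = cos \<gamma> * (psi0 \<gamma> \<bullet> x) - sin \<gamma> * (psi0_normal \<gamma> \<bullet> x)"
  by (simp add: inner_psi0 inner_psi0_normal algebra_simps cos_mult_cos_mult)

lemma Xm_mult_vec_nth:
  "(Xm \<gamma> *v x) $ 1 = (sin \<gamma>)\<^sup>2 * x $ 2 + sin \<gamma> * cos \<gamma> * x $ 3"
  "(Xm \<gamma> *v x) $ 2 = - (sin \<gamma>)\<^sup>2 * x $ 1"
  "(Xm \<gamma> *v x) $ 3 = - sin \<gamma> * cos \<gamma> * x $ 1"
  by (simp_all add: matrix_vector_mult_def sum_3 Xm_def Let_def)

lemma Ym_mult_vec_nth: "(Ym *v x) $ 1 = x $ 2" "(Ym *v x) $ 2 = - x $ 1" "(Ym *v x) $ 3 = 0"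
  by (simp_all add: matrix_vector_mult_def sum_3 Ym_def)

lemma Xm_mult_vec: "Xm \<gamma> *v x = sin \<gamma> *\<^sub>R ((psi0 \<gamma> \<bullet> x) *\<^sub>R axis 1 1 - x $ 1 *\<^sub>R psi0 \<gamma>)"
  by (simp add: vec_eq_iff forall_3 Xm_mult_vec_nth inner_psi0 psi0_nth axis_def power2_eq_square
      algebra_simps)

lemma Ym_mult_vec: "Ym *v x = x $ 2 *\<^sub>R axis 1 1 - x $ 1 *\<^sub>R axis 2 1"
  by (simp add: vec_eq_iff forall_3 Ym_mult_vec_nth axis_def)

lemma F1_mult_psi0: "F1 \<gamma> *v psi0 \<gamma> = 0"
  by (simp add: F1_def matrix_vector_mult_diff_rdistrib Xm_mult_vec Ym_mult_vec psi0_nth)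

lemma F1_commutator: "B \<in> {Xm \<gamma>, Ym} \<Longrightarrow> F1 \<gamma> ** B - B ** F1 \<gamma> = F2 \<gamma>"
  by (auto simp: F1_def F2_def vec_eq_iff matrix_matrix_mult_def algebra_simps sum_subtractf)

lemma F2_Xm_commutator_mult_vec:
  "(F2 \<gamma> ** Xm \<gamma> - Xm \<gamma> ** F2 \<gamma>) *v x = - ((sin \<gamma>)\<^sup>2 *\<^sub>R (F1 \<gamma> *v x))"
  by (simp add: F1_def F2_def vec_eq_iff forall_3 matrix_vector_mult_diff_rdistrib
      matrix_vector_mul_assoc[symmetric] Xm_mult_vec_nth Ym_mult_vec_nth power2_eq_square
      algebra_simps cos_mult_cos_mult)

lemma pure_X_reaches_Sigma:
  assumes "0 < sin \<gamma>"
  defines "\<psi> \<equiv> \<lambda>t. sin (sin \<gamma> * t) *\<^sub>R axis 1 1 + cos (sin \<gamma> * t) *\<^sub>R psi0 \<gamma>"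
  shows "admissible \<gamma> (\<lambda>_. Xm \<gamma>) \<psi> (pi / (2 * sin \<gamma>))" and "inSigma (\<psi> (pi / (2 * sin \<gamma>)))"
proof -
  have "(\<psi> has_vector_derivative Xm \<gamma> *v \<psi> t) (at t within {0..pi / (2 * sin \<gamma>)})" for t
  proof -
    have "(\<psi> has_vector_derivative
        (cos (sin \<gamma> * t) * sin \<gamma>) *\<^sub>R axis 1 1 - (sin (sin \<gamma> * t) * sin \<gamma>) *\<^sub>R psi0 \<gamma>)
        (at t within {0..pi / (2 * sin \<gamma>)})"
      unfolding \<psi>_def by (rule derivative_eq_intros refl | simp)+
    moreover have "Xm \<gamma> *v \<psi> t =
        (cos (sin \<gamma> * t) * sin \<gamma>) *\<^sub>R axis 1 1 - (sin (sin \<gamma> * t) * sin \<gamma>) *\<^sub>R psi0 \<gamma>"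
      by (simp add: \<psi>_def Xm_mult_vec inner_add_right inner_axis psi0_nth algebra_simps)
    ultimately show ?thesis by simp
  qed
  moreover have "continuous_on {0..pi / (2 * sin \<gamma>)} \<psi>"
    unfolding \<psi>_def by (intro continuous_intros)
  moreover have "control_disc (\<lambda>_. Xm \<gamma>) (pi / (2 * sin \<gamma>)) = {}"
    by (simp add: control_disc_def)
  ultimately show "admissible \<gamma> (\<lambda>_. Xm \<gamma>) \<psi> (pi / (2 * sin \<gamma>))"
    using assms(1) by (simp add: admissible_def \<psi>_def)
  show "inSigma (\<psi> (pi / (2 * sin \<gamma>)))"
    using assms(1) by (simp add: inSigma_def \<psi>_def inner_axis psi0_nth)
qed

text \<open>cos \<gamma> times this expression is the third coordinate of the trajectory after a Y-arc of
  length t followed by an X-arc of duration v / sin \<gamma>.\<close>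
lemma height_after_Y_then_X_pos:
  fixes s t v :: real
  assumes s: "0 < s" "s < 1" and t: "0 < t" and v: "0 \<le> v" and tv: "s * t + v \<le> pi / 2"
  shows "0 < cos v - s * sin t * sin v + s\<^sup>2 * (1 - cos t) * (1 - cos v)"
proof -
  have st: "0 < s * t" using s t by simp
  have "s * sin t * sin v < cos v"
  proof (cases "sin t \<le> 0")
    case True
    have "0 < cos v" using v st tv by (intro cos_gt_zero_pi) auto
    moreover have "0 \<le> sin v" using v st tv by (intro sin_ge_zero) auto
    moreover have "s * sin t \<le> 0" using True s by (simp add: mult_nonneg_nonpos)
    ultimately have "s * sin t * sin v \<le> 0" by (simp add: mult_nonpos_nonneg)
    with \<open>0 < cos v\<close> show ?thesis by linarith
  next
    case False
    have "s * sin t * sin v \<le> s * sin t"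
      using False s by (intro mult_left_le) auto
    also have "\<dots> < sin (s * t)"
      using mult_sin_less_sin_mult[OF s t] tv v by linarith
    also have "\<dots> = cos (pi / 2 - s * t)"
      by (simp add: cos_sin_eq)
    also have "\<dots> \<le> cos v"
      using v tv st by (intro cos_monotone_0_pi_le) auto
    finally show ?thesis .
  qed
  moreover have "0 \<le> s\<^sup>2 * (1 - cos t) * (1 - cos v)"
    by (intro mult_nonneg_nonneg) auto
  ultimately show ?thesis by linarith
qed

section \<open>Regular time-optimal extremals\<close>

locale regular_optimal_extremal =
  fixes \<gamma> :: real and A :: "real \<Rightarrow> real^3^3" and \<psi> :: "real \<Rightarrow> real^3" and T :: real
    and p :: "real \<Rightarrow> real^3"
  assumes gamma_pos: "0 < \<gamma>" and gamma_less: "\<gamma> < pi / 2"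
    and regular: "regular_extremal \<gamma> A \<psi> T p"
    and optimal: "time_optimal \<gamma> A \<psi> T"
begin

lemma sin_gamma_pos: "0 < sin \<gamma>"
  using gamma_pos gamma_less by (intro sin_gt_zero) auto

lemma sin_gamma_less_1: "sin \<gamma> < 1"
  using gamma_pos gamma_less sin_monotone_2pi[of \<gamma> "pi / 2"] by simp

lemma cos_gamma_pos: "0 < cos \<gamma>"
  using gamma_pos gamma_less by (intro cos_gt_zero) auto

lemma normal: "normal_extremal \<gamma> A \<psi> T p"
  using regular by (simp add: regular_extremal_def)

lemma admissible: "admissible \<gamma> A \<psi> T"
  using normal by (simp add: normal_extremal_def)

lemma trajectory_continuous: "continuous_on {0..T} \<psi>"
  using admissible by (simp add: admissible_def)

lemma psi_T_nth_3: "\<psi> T $ 3 = 0"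
  using optimal by (simp add: time_optimal_def inSigma_def inner_axis)

lemma T_pos: "0 < T"
proof -
  have "\<psi> 0 $ 3 = cos \<gamma>"
    using admissible by (simp add: admissible_def psi0_nth)
  then have "T \<noteq> 0"
    using psi_T_nth_3 cos_gamma_pos by auto
  then show ?thesis
    using admissible by (simp add: admissible_def)
qed

lemma sin_gamma_mult_T_le: "sin \<gamma> * T \<le> pi / 2"
proof -
  have "T \<le> pi / (2 * sin \<gamma>)"
    using optimal pure_X_reaches_Sigma[OF sin_gamma_pos] unfolding time_optimal_def by blast
  then show ?thesis
    using sin_gamma_pos by (simp add: field_simps)
qed

lemma switching_times_subset: "switching_times A T \<subseteq> {0<..<T}"
  by (auto simp: switching_times_def)

lemma finite_switching_times: "finite (switching_times A T)"
proof (rule finite_subset)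
  show "finite (control_disc A T)"
    using admissible by (simp add: admissible_def)
qed (auto simp: switching_times_def control_disc_def)

context
  fixes t assumes t: "t \<in> {0<..<T}" "t \<notin> switching_times A T"
begin

lemma at_within_horizon: "at t within {0..T} = at t"
  using t(1) by (intro at_within_Icc_at) auto

lemma not_in_control_disc: "t \<in> {0..T} - control_disc A T"
  using t by (auto simp: switching_times_def control_disc_def)

lemma control_isCont: "isCont A t"
  using t at_within_horizon by (simp add: switching_times_def)

lemma trajectory_has_derivative: "(\<psi> has_vector_derivative A t *v \<psi> t) (at t)"
  using admissible not_in_control_disc at_within_horizon unfolding admissible_def by metis

lemma costate_has_derivative: "(p has_vector_derivative - (transpose (A t) *v p t)) (at t)"
  using normal not_in_control_disc at_within_horizon unfolding normal_extremal_def by metis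

lemma phi1_has_derivative: "(phi1 \<gamma> \<psi> p has_real_derivative phi2 \<gamma> \<psi> p t) (at t)"
proof -
  have "A t \<in> {Xm \<gamma>, Ym}"
    using admissible t by (auto simp: admissible_def)
  then show ?thesis
    using inner_mult_vec_has_derivative[OF costate_has_derivative trajectory_has_derivative, of "F1 \<gamma>"]
    by (simp add: phi1_def[abs_def] phi2_def F1_commutator)
qed

lemma phi2_has_derivative_on_X:
  assumes "A t = Xm \<gamma>"
  shows "(phi2 \<gamma> \<psi> p has_real_derivative - ((sin \<gamma>)\<^sup>2 * phi1 \<gamma> \<psi> p t)) (at t)"
  using inner_mult_vec_has_derivative[OF costate_has_derivative trajectory_has_derivative, of "F2 \<gamma>"]
  by (simp add: phi1_def phi2_def[abs_def] assms F2_Xm_commutator_mult_vec)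

end

lemma phi1_continuous: "continuous_on {0..T} (phi1 \<gamma> \<psi> p)"
  and phi2_continuous: "continuous_on {0..T} (phi2 \<gamma> \<psi> p)"
  using admissible normal unfolding admissible_def normal_extremal_def phi1_def[abs_def] phi2_def[abs_def]
  by (auto intro!: continuous_intros bounded_linear.continuous_on[OF matrix_vector_mul_bounded_linear])

lemma phi1_0: "phi1 \<gamma> \<psi> p 0 = 0"
  using admissible by (simp add: admissible_def phi1_def F1_mult_psi0)

lemma phi1_not_identically_zero:
  assumes "0 \<le> a" "a < b" "b \<le> T"
  shows "\<exists>t\<in>{a..b}. phi1 \<gamma> \<psi> p t \<noteq> 0"
proof (rule ccontr)
  assume "\<not> (\<exists>t\<in>{a..b}. phi1 \<gamma> \<psi> p t \<noteq> 0)"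
  then have zero: "phi1 \<gamma> \<psi> p t = 0" if "t \<in> {a..b}" for t
    using that by blast
  have "b \<in> {0..T}" "phi1 \<gamma> \<psi> p b = 0"
    using assms zero by auto
  then obtain e where "0 < e" and e: "\<forall>u\<in>{0..T}. phi1 \<gamma> \<psi> p u = 0 \<and> \<bar>u - b\<bar> < e \<longrightarrow> u = b"
    using regular unfolding regular_extremal_def by blast
  have "max a (b - e / 2) = b"
    using assms \<open>0 < e\<close> by (intro e[rule_format] conjI zero) auto
  then show False
    using assms \<open>0 < e\<close> by (simp add: max_def split: if_splits)
qed

lemma control_constant_on_arc:
  assumes "0 \<le> a" "a < b" "b \<le> T" "\<forall>t\<in>{a<..<b}. t \<notin> switching_times A T"
  obtains B where "B \<in> {Xm \<gamma>, Ym}" "\<forall>t\<in>{a<..<b}. A t = B"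
proof -
  have "continuous_on {a<..<b} A"
    using assms by (intro continuous_at_imp_continuous_on ballI control_isCont) auto
  then have "connected (A ` {a<..<b})"
    by (intro connected_continuous_image) auto
  moreover have range: "A ` {a<..<b} \<subseteq> {Xm \<gamma>, Ym}"
    using admissible assms by (auto simp: admissible_def)
  moreover have "finite (A ` {a<..<b})"
    using range by (rule finite_subset) simp
  ultimately obtain B where "A ` {a<..<b} = {B}"
    using connected_finite_iff_sing[of "A ` {a<..<b}"] assms(2) by auto
  with range show thesis
    using that[of B] by auto
qed

lemma phi1_nonpos_on_Y_arc:
  assumes "a < b" "{a<..<b} \<subseteq> {0..T}" "\<forall>t\<in>{a<..<b}. A t = Ym"
  shows "\<exists>t\<in>{a<..<b}. phi1 \<gamma> \<psi> p t \<le> 0"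
proof -
  have "phi1 \<gamma> \<psi> p t = p t \<bullet> (Xm \<gamma> *v \<psi> t) - p t \<bullet> (Ym *v \<psi> t)" for t
    by (simp add: phi1_def F1_def matrix_vector_mult_diff_rdistrib inner_diff_right)
  then have "AE t in lborel. t \<in> {0..T} \<longrightarrow> (A t = Ym \<longrightarrow> phi1 \<gamma> \<psi> p t \<le> 0)"
    using normal unfolding normal_extremal_def by (auto elim!: AE_mp)
  from AE_lborel_imp_ex_in_Ioo[OF this assms(1,2)] show ?thesis
    using assms(3) by auto
qed

lemma no_X_arc_between_zeros:
  assumes "0 \<le> a" "a < b" "b \<le> T"
    and arc: "\<forall>t\<in>{a<..<b}. t \<notin> switching_times A T \<and> A t = Xm \<gamma>"
    and zeros: "phi1 \<gamma> \<psi> p a = 0" "phi1 \<gamma> \<psi> p b = 0"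
  shows False
proof -
  have "sin \<gamma> * (b - a) \<le> sin \<gamma> * T"
    using assms sin_gamma_pos by (intro mult_left_mono) auto
  then have "sin \<gamma> * (b - a) < pi"
    using sin_gamma_mult_T_le pi_gt_zero by linarith
  then have "phi1 \<gamma> \<psi> p t = 0" if "t \<in> {a..b}" for t
  proof (rule harmonic_eq_0_between_close_zeros[OF sin_gamma_pos \<open>a < b\<close> _ _ _ _ _ zeros that])
    show "continuous_on {a..b} (phi1 \<gamma> \<psi> p)" "continuous_on {a..b} (phi2 \<gamma> \<psi> p)"
      using assms by (auto intro: continuous_on_subset[OF phi1_continuous] continuous_on_subset[OF phi2_continuous])
  next
    fix t assume "a < t" "t < b"
    then have t: "t \<in> {0<..<T}" "t \<notin> switching_times A T" "A t = Xm \<gamma>"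
      using assms by auto
    show "(phi1 \<gamma> \<psi> p has_real_derivative phi2 \<gamma> \<psi> p t) (at t)"
      using phi1_has_derivative[OF t(1,2)] .
    show "(phi2 \<gamma> \<psi> p has_real_derivative - ((sin \<gamma>)\<^sup>2 * phi1 \<gamma> \<psi> p t)) (at t)"
      using phi2_has_derivative_on_X[OF t] .
  qed
  with phi1_not_identically_zero[OF assms(1-3)] show False
    by blast
qed

lemma no_Y_arcs_around_switching:
  assumes t: "t \<in> switching_times A T" and "0 \<le> a" "a < t" "t < b" "b \<le> T"
    and arc: "\<forall>u\<in>{a<..<b}. u \<noteq> t \<longrightarrow> u \<notin> switching_times A T \<and> A u = Ym"
  shows False
proof -
  have sw: "phi1 \<gamma> \<psi> p t = 0" "phi2 \<gamma> \<psi> p t \<noteq> 0"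
    using regular t by (auto simp: regular_extremal_def)
  have "continuous_on {a..b} (phi1 \<gamma> \<psi> p)"
    using assms by (auto intro: continuous_on_subset[OF phi1_continuous])
  moreover have "(phi1 \<gamma> \<psi> p has_real_derivative phi2 \<gamma> \<psi> p x) (at x)"
    if "a < x" "x < b" "x \<noteq> t" for x
    using that assms by (intro phi1_has_derivative) auto
  moreover have "isCont (phi2 \<gamma> \<psi> p) t"
    using continuous_on_interior[OF phi2_continuous] assms by auto
  ultimately obtain c d where cd: "a \<le> c" "c < d" "d \<le> b"
    and pos: "\<forall>x\<in>{c<..<d}. 0 < phi1 \<gamma> \<psi> p x"
    using simple_zero_obtains_positive_side[of a t b "phi1 \<gamma> \<psi> p" "phi2 \<gamma> \<psi> p"] assms sw by blast
  moreover have "t \<notin> {c<..<d}"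
    using pos sw(1) by fastforce
  ultimately obtain u where "u \<in> {c<..<d}" "phi1 \<gamma> \<psi> p u \<le> 0"
    using phi1_nonpos_on_Y_arc[of c d] arc assms by fastforce
  with pos show False
    by fastforce
qed

lemma psi_after_initial_Y_arc:
  assumes "0 < b" "b \<le> T" and arc: "\<forall>t\<in>{0<..<b}. t \<notin> switching_times A T \<and> A t = Ym"
  shows "\<psi> b $ 1 = sin \<gamma> * sin b" "\<psi> b $ 2 = sin \<gamma> * cos b" "\<psi> b $ 3 = cos \<gamma>"
proof -
  have "(\<psi> has_vector_derivative
      1 *\<^sub>R ((axis 2 1 \<bullet> \<psi> t) *\<^sub>R axis 1 1 - (axis 1 1 \<bullet> \<psi> t) *\<^sub>R axis 2 1)) (at t)"
    if "0 < t" "t < b" for t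
    using trajectory_has_derivative[of t] assms that by (simp add: Ym_mult_vec inner_axis')
  note rot = rotation_arc[of "axis 1 1" "axis 2 1" 0 b \<psi> 1 b, OF _ _ _
      continuous_on_subset[OF trajectory_continuous] this]
  have "\<psi> 0 = psi0 \<gamma>"
    using admissible by (simp add: admissible_def)
  then show "\<psi> b $ 1 = sin \<gamma> * sin b" "\<psi> b $ 2 = sin \<gamma> * cos b" "\<psi> b $ 3 = cos \<gamma>"
    using rot(1,2) rot(3)[of "axis 3 1"] assms by (simp_all add: inner_axis_axis inner_axis' psi0_nth)
qed

lemma no_Y_then_X_pattern:
  assumes "0 < t\<^sub>1" "t\<^sub>1 < T"
    and Y_arc: "\<forall>t\<in>{0<..<t\<^sub>1}. t \<notin> switching_times A T \<and> A t = Ym"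
    and X_arc: "\<forall>t\<in>{t\<^sub>1<..<T}. t \<notin> switching_times A T \<and> A t = Xm \<gamma>"
  shows False
proof -
  let ?s = "sin \<gamma>" and ?c = "cos \<gamma>" and ?v = "sin \<gamma> * (T - t\<^sub>1)"
  note start = psi_after_initial_Y_arc[OF assms(1) less_imp_le[OF assms(2)] Y_arc]
  have "(\<psi> has_vector_derivative
      ?s *\<^sub>R ((psi0 \<gamma> \<bullet> \<psi> t) *\<^sub>R axis 1 1 - (axis 1 1 \<bullet> \<psi> t) *\<^sub>R psi0 \<gamma>)) (at t)"
    if "t\<^sub>1 < t" "t < T" for t
    using trajectory_has_derivative[of t] assms that by (simp add: Xm_mult_vec inner_axis')
  note rot = rotation_arc[of "axis 1 1" "psi0 \<gamma>" t\<^sub>1 T \<psi> ?s T, OF _ _ _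
      continuous_on_subset[OF trajectory_continuous] this]
  have "psi0_normal \<gamma> \<bullet> \<psi> T = psi0_normal \<gamma> \<bullet> \<psi> t\<^sub>1"
    using rot(3)[of "psi0_normal \<gamma>"] assms by simp
  then have "\<psi> T $ 3 = ?c * ((psi0 \<gamma> \<bullet> \<psi> t\<^sub>1) * cos ?v - (axis 1 1 \<bullet> \<psi> t\<^sub>1) * sin ?v)
      - ?s * (psi0_normal \<gamma> \<bullet> \<psi> t\<^sub>1)"
    using nth_3_eq_psi0_frame[of "\<psi> T" \<gamma>] rot(2) assms by simp
  also have "\<dots> = ?c * (cos ?v - ?s * sin t\<^sub>1 * sin ?v + ?s\<^sup>2 * (1 - cos t\<^sub>1) * (1 - cos ?v))"
    unfolding inner_psi0 inner_psi0_normal inner_axis' real_inner_1_left start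
    using sin_cos_squared_add[of \<gamma>] by algebra
  also have "\<dots> > 0"
  proof (intro mult_pos_pos cos_gamma_pos
      height_after_Y_then_X_pos[OF sin_gamma_pos sin_gamma_less_1 \<open>0 < t\<^sub>1\<close>])
    show "0 \<le> ?v"
      using sin_gamma_pos assms by simp
    show "?s * t\<^sub>1 + ?v \<le> pi / 2"
      using sin_gamma_mult_T_le by (simp add: algebra_simps)
  qed
  finally show False
    using psi_T_nth_3 by simp
qed

lemma no_switching_after_initial_Y_arc:
  assumes t\<^sub>1: "t\<^sub>1 \<in> switching_times A T"
    and Y_arc: "\<forall>t\<in>{0<..<t\<^sub>1}. t \<notin> switching_times A T \<and> A t = Ym"
  shows False
proof -
  have "0 < t\<^sub>1" "t\<^sub>1 < T"
    using t\<^sub>1 switching_times_subset by auto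
  obtain t\<^sub>2 where "t\<^sub>1 < t\<^sub>2" "t\<^sub>2 \<le> T" and t\<^sub>2: "t\<^sub>2 \<in> insert T (switching_times A T)"
    and gap: "\<forall>t\<in>{t\<^sub>1<..<t\<^sub>2}. t \<notin> switching_times A T"
    using finite_obtains_gap[OF finite_switching_times \<open>t\<^sub>1 < T\<close>] by blast
  obtain B where B: "B \<in> {Xm \<gamma>, Ym}" "\<forall>t\<in>{t\<^sub>1<..<t\<^sub>2}. A t = B"
    using control_constant_on_arc[OF _ \<open>t\<^sub>1 < t\<^sub>2\<close> \<open>t\<^sub>2 \<le> T\<close> gap] \<open>0 < t\<^sub>1\<close> by auto
  show False
  proof (cases "B = Ym")
    case True
    show False
      by (rule no_Y_arcs_around_switching[OF t\<^sub>1, of 0 t\<^sub>2])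
        (use \<open>0 < t\<^sub>1\<close> \<open>t\<^sub>1 < t\<^sub>2\<close> \<open>t\<^sub>2 \<le> T\<close> Y_arc gap B True in auto)
  next
    case False
    with B have X_arc: "\<forall>t\<in>{t\<^sub>1<..<t\<^sub>2}. t \<notin> switching_times A T \<and> A t = Xm \<gamma>"
      using gap by auto
    show False
    proof (cases "t\<^sub>2 = T")
      case True
      then show False
        using no_Y_then_X_pattern \<open>0 < t\<^sub>1\<close> \<open>t\<^sub>1 < T\<close> Y_arc X_arc by blast
    next
      case False
      with t\<^sub>2 have "phi1 \<gamma> \<psi> p t\<^sub>1 = 0" "phi1 \<gamma> \<psi> p t\<^sub>2 = 0"
        using regular t\<^sub>1 by (auto simp: regular_extremal_def)
      then show False
        by (intro no_X_arc_between_zeros[of t\<^sub>1 t\<^sub>2])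
          (use \<open>0 < t\<^sub>1\<close> \<open>t\<^sub>1 < t\<^sub>2\<close> \<open>t\<^sub>2 \<le> T\<close> X_arc in auto)
    qed
  qed
qed

lemma switching_times_empty: "switching_times A T = {}"
proof (rule ccontr)
  assume nonempty: "switching_times A T \<noteq> {}"
  obtain t\<^sub>1 where "0 < t\<^sub>1" "t\<^sub>1 \<le> T" and t\<^sub>1: "t\<^sub>1 \<in> insert T (switching_times A T)"
    and gap: "\<forall>t\<in>{0<..<t\<^sub>1}. t \<notin> switching_times A T"
    using finite_obtains_gap[OF finite_switching_times T_pos] by blast
  have "t\<^sub>1 \<in> switching_times A T"
  proof (rule ccontr)
    assume "t\<^sub>1 \<notin> switching_times A T"
    with t\<^sub>1 gap have "switching_times A T \<inter> {0<..<T} = {}"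
      by auto
    with nonempty switching_times_subset show False
      by blast
  qed
  obtain B where B: "B \<in> {Xm \<gamma>, Ym}" "\<forall>t\<in>{0<..<t\<^sub>1}. A t = B"
    using control_constant_on_arc[OF _ \<open>0 < t\<^sub>1\<close> \<open>t\<^sub>1 \<le> T\<close> gap] by auto
  show False
  proof (cases "B = Ym")
    case True
    then show False
      using no_switching_after_initial_Y_arc \<open>t\<^sub>1 \<in> switching_times A T\<close> gap B by blast
  next
    case False
    with B have "\<forall>t\<in>{0<..<t\<^sub>1}. t \<notin> switching_times A T \<and> A t = Xm \<gamma>"
      using gap by auto
    moreover have "phi1 \<gamma> \<psi> p t\<^sub>1 = 0"
      using regular \<open>t\<^sub>1 \<in> switching_times A T\<close> by (auto simp: regular_extremal_def)
    ultimately show False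
      using no_X_arc_between_zeros[of 0 t\<^sub>1] phi1_0 \<open>0 < t\<^sub>1\<close> \<open>t\<^sub>1 \<le> T\<close> by auto
  qed
qed

lemma control_eq_Xm:
  assumes "t \<in> {0<..<T}"
  shows "A t = Xm \<gamma>"
proof -
  have no_switch: "\<forall>t\<in>{0<..<T}. t \<notin> switching_times A T"
    using switching_times_empty by simp
  obtain B where B: "B \<in> {Xm \<gamma>, Ym}" "\<forall>t\<in>{0<..<T}. A t = B"
    using control_constant_on_arc[OF _ T_pos _ no_switch] by auto
  have "B \<noteq> Ym"
  proof
    assume "B = Ym"
    then have "\<psi> T $ 3 = cos \<gamma>"
      using psi_after_initial_Y_arc[OF T_pos] no_switch B by auto
    then show False
      using psi_T_nth_3 cos_gamma_pos by simp
  qed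
  with B assms show ?thesis
    by auto
qed

end

theorem mainTheorem13:
  fixes \<gamma> :: real and A :: "real \<Rightarrow> real^3^3" and \<psi> p :: "real \<Rightarrow> real^3" and T :: real
  assumes "0 < \<gamma>" and "\<gamma> < pi / 2"
    and "regular_extremal \<gamma> A \<psi> T p"
    and "time_optimal \<gamma> A \<psi> T"
  shows "card (switching_times A T) \<le> 2 \<and>
         (bang_pattern A T = [Xm \<gamma>] \<or> bang_pattern A T = [Xm \<gamma>, Ym, Xm \<gamma>])"
proof -
  interpret regular_optimal_extremal \<gamma> A \<psi> T p
    using assms by unfold_locales
  have "A (T / 2) = Xm \<gamma>"
    using T_pos by (intro control_eq_Xm) auto
  then show ?thesis
    by (simp add: switching_times_empty bang_pattern_def)
qed

end
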